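(* Let $0<\alpha<\eta$. Let $D\subseteq\mathbb R^d$ and $x,y\in D$, $x\ne y$, be such that $y+\sum_{j=1}^d(\rho_j\,d(x,y))^{\mathfrak s_j}\mathbf e_j\in D$ for all $\rho=(\rho_1,\dots,\rho_d)\in\mathbb N^d$. Assume $U$ is a germ over $D$ with $\|U\|_{G^\eta(D)}+[U]_{G^{\eta,\alpha}(D)}<\infty$, and let $(\nu_\beta)_{|\beta|\le\eta}\subset\mathbb R$; for $z\in D$ write $P(z):=\sum_{|\beta|\le\eta}\nu_\beta(z-y)^\beta$. If there is $C\ge1$ such that for all $z\in D$ $$|(U_x-U_y-P)(z)|\le C[U]_{G^{\eta,\alpha}(D)}\,d(y,z)^\alpha\big(d(x,y)+d(y,z)\big)^{\eta-\alpha},$$ then for all $|\beta|\le\eta$ it holds $|\nu_\beta|\lesssim_{\mathfrak s,d,\eta,\alpha}\big(\|U\|_{G^\eta(D)}+C[U]_{G^{\eta,\alpha}(D)}\big)d(x,y)^{\eta-|\beta|}$.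
   Context: Fix a scaling $\mathfrak s\in\mathbb N^d$; $\mathbb N=\{1,2,\dots\}$; for $\beta\in\mathbb N_0^d$, $|\beta|:=\sum_i\mathfrak s_i\beta_i$ and $z^\beta:=\prod_i z_i^{\beta_i}$; $d(x,y):=\sum_i|x_i-y_i|^{1/\mathfrak s_i}$; $\mathcal P_k$ the polynomials $\sum_{|\beta|\le k}c_\beta z^\beta$. A germ over $D$ is a family $U=(U_x)_{x\in D}$ of continuous $U_x:D\to\mathbb C$; $\|U\|_{G^\eta(D)}$ is the infimum of $M>0$ with $|U_x(y)|\le M\,d(x,y)^\eta$ for all $x,y\in D$; $[U]_{G^{\eta,\alpha}(D)}$ is the infimum of $M>0$ such that for all $x,y\in D$ there is $Q\in\mathcal P_{\lfloor\eta\rfloor}$ with $|(U_x-U_y-Q)(z)|\le M\,d(y,z)^\alpha(d(x,y)+d(y,z))^{\eta-\alpha}$ for all $z\in D$. *)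

theory Defs
  imports "HOL-Analysis.Analysis"
begin

text \<open>Points of R^d are vectors real^'n (d = CARD('n)); the scaling is s :: 'n => nat
  (assumed >= 1 componentwise); multi-indices are 'n => nat.\<close>

definition sdeg :: "('n::finite \<Rightarrow> nat) \<Rightarrow> ('n \<Rightarrow> nat) \<Rightarrow> nat" where
  "sdeg s \<beta> = (\<Sum>i\<in>UNIV. s i * \<beta> i)"

definition mono_pow :: "real^'n::finite \<Rightarrow> ('n \<Rightarrow> nat) \<Rightarrow> real" where
  "mono_pow z \<beta> = (\<Prod>i\<in>UNIV. (z $ i) ^ \<beta> i)"

definition sdist :: "('n::finite \<Rightarrow> nat) \<Rightarrow> real^'n \<Rightarrow> real^'n \<Rightarrow> real" where
  "sdist s x y = (\<Sum>i\<in>UNIV. \<bar>x $ i - y $ i\<bar> powr (1 / real (s i)))"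

definition midx :: "('n::finite \<Rightarrow> nat) \<Rightarrow> real \<Rightarrow> ('n \<Rightarrow> nat) set" where
  "midx s k = {\<beta>. real (sdeg s \<beta>) \<le> k}"

definition is_spoly :: "('n::finite \<Rightarrow> nat) \<Rightarrow> nat \<Rightarrow> (real^'n \<Rightarrow> complex) \<Rightarrow> bool" where
  "is_spoly s k Q \<longleftrightarrow> (\<exists>c :: ('n \<Rightarrow> nat) \<Rightarrow> complex.
      \<forall>z. Q z = (\<Sum>\<beta>\<in>{\<beta>. sdeg s \<beta> \<le> k}. c \<beta> * of_real (mono_pow z \<beta>)))"

definition is_germ :: "(real^'n) set \<Rightarrow> (real^'n \<Rightarrow> real^'n \<Rightarrow> complex) \<Rightarrow> bool" where
  "is_germ D U \<longleftrightarrow> (\<forall>x\<in>D. continuous_on D (U x))"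

definition germ_norm_set :: "('n::finite \<Rightarrow> nat) \<Rightarrow> real \<Rightarrow> (real^'n) set
    \<Rightarrow> (real^'n \<Rightarrow> real^'n \<Rightarrow> complex) \<Rightarrow> real set" where
  "germ_norm_set s \<eta> D U = {M. M > 0 \<and>
     (\<forall>x\<in>D. \<forall>y\<in>D. cmod (U x y) \<le> M * sdist s x y powr \<eta>)}"

definition germ_norm :: "('n::finite \<Rightarrow> nat) \<Rightarrow> real \<Rightarrow> (real^'n) set
    \<Rightarrow> (real^'n \<Rightarrow> real^'n \<Rightarrow> complex) \<Rightarrow> real" where
  "germ_norm s \<eta> D U = Inf (germ_norm_set s \<eta> D U)"

definition germ_semi_set :: "('n::finite \<Rightarrow> nat) \<Rightarrow> real \<Rightarrow> real \<Rightarrow> (real^'n) set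
    \<Rightarrow> (real^'n \<Rightarrow> real^'n \<Rightarrow> complex) \<Rightarrow> real set" where
  "germ_semi_set s \<eta> \<alpha> D U = {M. M > 0 \<and>
     (\<forall>x\<in>D. \<forall>y\<in>D. \<exists>Q. is_spoly s (nat \<lfloor>\<eta>\<rfloor>) Q \<and>
        (\<forall>z\<in>D. cmod (U x z - U y z - Q z)
           \<le> M * sdist s y z powr \<alpha> * (sdist s x y + sdist s y z) powr (\<eta> - \<alpha>)))}"

definition germ_semi :: "('n::finite \<Rightarrow> nat) \<Rightarrow> real \<Rightarrow> real \<Rightarrow> (real^'n) set
    \<Rightarrow> (real^'n \<Rightarrow> real^'n \<Rightarrow> complex) \<Rightarrow> real" where
  "germ_semi s \<eta> \<alpha> D U = Inf (germ_semi_set s \<eta> \<alpha> D U)"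

end

(*
  Test the hypothesis at the admissible points z = y + ((rho_j d(x,y))^(s_j))_j.  Bounding U_x(z)
  and U_y(z) by the G^eta norm gives |P(z)| <= (2 |U| + C [U]) (1 + sum_j rho_j)^eta d(x,y)^eta,
  while (z - y)^beta = d(x,y)^|beta| prod_j rho_j^(s_j beta_j).  Along rho_j = t^(M^j), with M larger
  than every s_j beta_j (Kronecker substitution), the exponents sum_j s_j beta_j M^j are distinct
  base-M numerals, so P(z) is a polynomial in t with coefficients nu_beta d(x,y)^|beta|.  Lagrange
  interpolation at t = 1, ..., T bounds these coefficients by finitely many values, with a constant
  depending only on s, eta and the dimension.
*)
theory Submission
  imports Defs "HOL-Computational_Algebra.Polynomial"
begin

section \<open>The scaled distance\<close>

lemma add_pow_le_pow_add:
  fixes u v :: real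
  assumes "u \<ge> 0" "v \<ge> 0" "n \<ge> 1"
  shows "u ^ n + v ^ n \<le> (u + v) ^ n"
  using assms(3)
proof (induction n rule: dec_induct)
  case (step n)
  have "u ^ Suc n + v ^ Suc n \<le> (u + v) * (u ^ n + v ^ n)"
    using assms by (simp add: algebra_simps)
  also have "\<dots> \<le> (u + v) * (u + v) ^ n"
    using step assms by (intro mult_left_mono) auto
  finally show ?case by simp
qed simp

lemma root_add_le:
  fixes a b :: real
  assumes "a \<ge> 0" "b \<ge> 0" "n \<ge> 1"
  shows "root n (a + b) \<le> root n a + root n b"
proof -
  have "a + b \<le> (root n a + root n b) ^ n"
    using add_pow_le_pow_add[of "root n a" "root n b" n] assms by simp
  then have "root n (a + b) \<le> root n ((root n a + root n b) ^ n)"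
    using assms by (intro real_root_le_mono) auto
  then show ?thesis
    using assms by (simp add: real_root_power_cancel)
qed

lemma sdist_nonneg: "sdist s x y \<ge> 0"
  unfolding sdist_def by (intro sum_nonneg) auto

lemma sdist_pos:
  assumes "x \<noteq> y"
  shows "sdist s x y > 0"
proof -
  obtain i where "x $ i \<noteq> y $ i"
    using assms by (metis vec_eq_iff)
  then have "0 < \<bar>x $ i - y $ i\<bar> powr (1 / real (s i))"
    by simp
  also have "\<dots> \<le> sdist s x y"
    unfolding sdist_def by (rule member_le_sum) auto
  finally show ?thesis .
qed

lemma sdist_triangle:
  assumes "\<forall>i. s i \<ge> 1"
  shows "sdist s x z \<le> sdist s x y + sdist s y z"
proof -
  have "\<bar>x $ i - z $ i\<bar> powr (1 / s i) \<le> \<bar>x $ i - y $ i\<bar> powr (1 / s i) + \<bar>y $ i - z $ i\<bar> powr (1 / s i)"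
    for i
  proof -
    have si: "s i \<ge> 1"
      using assms by simp
    have "root (s i) \<bar>x $ i - z $ i\<bar> \<le> root (s i) (\<bar>x $ i - y $ i\<bar> + \<bar>y $ i - z $ i\<bar>)"
      using si by (intro real_root_le_mono) auto
    also have "\<dots> \<le> root (s i) \<bar>x $ i - y $ i\<bar> + root (s i) \<bar>y $ i - z $ i\<bar>"
      using si by (intro root_add_le) auto
    finally show ?thesis
      using si by (simp add: root_powr_inverse)
  qed
  then show ?thesis
    unfolding sdist_def by (simp add: sum.distrib[symmetric] sum_mono)
qed

lemma sdist_add_powers:
  assumes "\<forall>i. s i \<ge> 1" "\<forall>j. r j \<ge> 0"
  shows "sdist s y (y + (\<chi> j. r j ^ s j)) = (\<Sum>j\<in>UNIV. r j)"
proof -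
  have "\<bar>y $ j - (y + (\<chi> j. r j ^ s j)) $ j\<bar> powr (1 / s j) = r j" for j
    using assms[rule_format, of j] by (simp add: root_powr_inverse[symmetric] real_root_power_cancel)
  then show ?thesis
    by (simp add: sdist_def)
qed

lemma germ_norm_nonneg: "germ_norm_set s \<eta> D U \<noteq> {} \<Longrightarrow> germ_norm s \<eta> D U \<ge> 0"
  unfolding germ_norm_def by (rule cInf_greatest) (auto simp: germ_norm_set_def)

lemma germ_semi_nonneg: "germ_semi_set s \<eta> \<alpha> D U \<noteq> {} \<Longrightarrow> germ_semi s \<eta> \<alpha> D U \<ge> 0"
  unfolding germ_semi_def by (rule cInf_greatest) (auto simp: germ_semi_set_def)

lemma germ_norm_bound:
  assumes "germ_norm_set s \<eta> D U \<noteq> {}" "x \<in> D" "y \<in> D"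
  shows "cmod (U x y) \<le> germ_norm s \<eta> D U * sdist s x y powr \<eta>"
proof (cases "sdist s x y = 0")
  case True
  obtain M where "M \<in> germ_norm_set s \<eta> D U"
    using assms by blast
  then have "cmod (U x y) \<le> M * sdist s x y powr \<eta>"
    using assms by (simp add: germ_norm_set_def)
  then show ?thesis
    using True by simp
next
  case False
  then have pos: "sdist s x y powr \<eta> > 0"
    by simp
  have "cmod (U x y) / sdist s x y powr \<eta> \<le> germ_norm s \<eta> D U"
    unfolding germ_norm_def
  proof (rule cInf_greatest[OF assms(1)])
    fix M
    assume "M \<in> germ_norm_set s \<eta> D U"
    then show "cmod (U x y) / sdist s x y powr \<eta> \<le> M"
      using assms pos by (auto simp: germ_norm_set_def divide_le_eq)
  qed
  then show ?thesis
    using pos by (simp add: divide_le_eq)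
qed

lemma germ_increment_polynomial_bound:
  assumes s: "\<forall>i. s i \<ge> 1" and "0 \<le> \<alpha>" "\<alpha> \<le> \<eta>" and "B \<ge> 0"
    and norm: "germ_norm_set s \<eta> D U \<noteq> {}" and D: "x \<in> D" "y \<in> D" "z \<in> D"
    and incr: "cmod (U x z - U y z - of_real p)
      \<le> B * sdist s y z powr \<alpha> * (sdist s x y + sdist s y z) powr (\<eta> - \<alpha>)"
  shows "\<bar>p\<bar> \<le> (2 * germ_norm s \<eta> D U + B) * (sdist s x y + sdist s y z) powr \<eta>"
proof -
  define b where "b = sdist s x y + sdist s y z"
  have b: "sdist s x z \<le> b" "sdist s y z \<le> b"
    using sdist_triangle[OF s, of x z y] by (auto simp: b_def sdist_nonneg)
  have "cmod (U w z) \<le> germ_norm s \<eta> D U * b powr \<eta>" if "w \<in> D" "sdist s w z \<le> b" for w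
  proof -
    have "cmod (U w z) \<le> germ_norm s \<eta> D U * sdist s w z powr \<eta>"
      using germ_norm_bound[OF norm that(1) D(3)] .
    also have "\<dots> \<le> germ_norm s \<eta> D U * b powr \<eta>"
      using germ_norm_nonneg[OF norm] that(2) assms(2,3)
      by (intro mult_left_mono powr_mono2) (auto simp: sdist_nonneg)
    finally show ?thesis .
  qed
  then have "cmod (U x z) \<le> germ_norm s \<eta> D U * b powr \<eta>" "cmod (U y z) \<le> germ_norm s \<eta> D U * b powr \<eta>"
    using D b by auto
  moreover have "cmod (U x z - U y z - of_real p) \<le> B * b powr \<eta>"
  proof -
    have "cmod (U x z - U y z - of_real p) \<le> B * (sdist s y z powr \<alpha> * b powr (\<eta> - \<alpha>))"
      using incr by (simp add: b_def mult.assoc)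
    also have "\<dots> \<le> B * (b powr \<alpha> * b powr (\<eta> - \<alpha>))"
      using b assms(2) \<open>B \<ge> 0\<close> by (intro mult_left_mono mult_right_mono powr_mono2) (auto simp: sdist_nonneg)
    also have "\<dots> = B * b powr \<eta>"
      by (simp add: powr_add[symmetric])
    finally show ?thesis .
  qed
  moreover have "\<bar>p\<bar> \<le> cmod (U x z) + cmod (U y z) + cmod (U x z - U y z - of_real p)"
    using norm_triangle_ineq4[of "U x z - U y z" "U x z - U y z - of_real p"]
      norm_triangle_ineq4[of "U x z" "U y z"] by simp
  ultimately show ?thesis
    unfolding b_def[symmetric] by (simp add: distrib_right)
qed

lemma germ_test_point_bound:
  assumes s: "\<forall>i. s i \<ge> 1" and "0 \<le> \<alpha>" "\<alpha> \<le> \<eta>" "B \<ge> 0"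
    and norm: "germ_norm_set s \<eta> D U \<noteq> {}" and "x \<in> D" "y \<in> D"
    and z: "y + (\<chi> j. (real (\<rho> j) * sdist s x y) ^ s j) \<in> D" (is "?z \<in> D")
    and incr: "\<forall>z\<in>D. cmod (U x z - U y z - of_real (P z))
      \<le> B * sdist s y z powr \<alpha> * (sdist s x y + sdist s y z) powr (\<eta> - \<alpha>)"
  shows "\<bar>P ?z\<bar> \<le> (2 * germ_norm s \<eta> D U + B) * (1 + (\<Sum>j\<in>UNIV. real (\<rho> j))) powr \<eta> * sdist s x y powr \<eta>"
proof -
  have "sdist s y ?z = (\<Sum>j\<in>UNIV. real (\<rho> j)) * sdist s x y"
    using sdist_add_powers[OF s, of "\<lambda>j. real (\<rho> j) * sdist s x y"]
    by (simp add: sdist_nonneg sum_distrib_right)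
  then have "sdist s x y + sdist s y ?z = (1 + (\<Sum>j\<in>UNIV. real (\<rho> j))) * sdist s x y"
    by (simp add: algebra_simps)
  then have "(sdist s x y + sdist s y ?z) powr \<eta> = (1 + (\<Sum>j\<in>UNIV. real (\<rho> j))) powr \<eta> * sdist s x y powr \<eta>"
    by (simp add: powr_mult sum_nonneg add_nonneg_nonneg sdist_nonneg)
  moreover have "\<bar>P ?z\<bar> \<le> (2 * germ_norm s \<eta> D U + B) * (sdist s x y + sdist s y ?z) powr \<eta>"
    using incr z by (intro germ_increment_polynomial_bound[OF s assms(2-4) norm \<open>x \<in> D\<close> \<open>y \<in> D\<close> z]) blast
  ultimately show ?thesis
    by (simp only: mult.assoc)
qed

section \<open>Lagrange interpolation\<close>

definition lagrange_basis :: "real set \<Rightarrow> real \<Rightarrow> real poly" where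
  "lagrange_basis X a = (\<Prod>b\<in>X - {a}. smult (1 / (a - b)) [:- b, 1:])"

lemma poly_lagrange_basis:
  assumes "finite X" "a \<in> X" "b \<in> X"
  shows "poly (lagrange_basis X a) b = (if b = a then 1 else 0)"
proof (cases "b = a")
  case True
  have "poly (smult (1 / (a - c)) [:- c, 1:]) a = 1" if "c \<in> X - {a}" for c
    using that by (simp add: divide_simps)
  then show ?thesis
    using True by (simp add: lagrange_basis_def poly_prod)
next
  case False
  then have "\<exists>c\<in>X - {a}. poly (smult (1 / (a - c)) [:- c, 1:]) b = 0"
    using assms by auto
  then show ?thesis
    using False assms(1) by (simp add: lagrange_basis_def poly_prod)
qed

lemma degree_lagrange_basis:
  assumes "finite X" "a \<in> X"
  shows "degree (lagrange_basis X a) < card X"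
proof -
  have "degree (lagrange_basis X a) \<le> (\<Sum>b\<in>X - {a}. degree (smult (1 / (a - b)) [:- b, 1:]))"
    unfolding lagrange_basis_def using assms(1) by (intro degree_prod_sum_le[unfolded comp_def]) simp
  also have "\<dots> \<le> (\<Sum>b\<in>X - {a}. 1)"
    by (intro sum_mono order.trans[OF degree_smult_le]) simp
  also have "\<dots> = card (X - {a})"
    by simp
  also have "\<dots> < card X"
    using assms by (metis card_Diff1_less)
  finally show ?thesis .
qed

lemma lagrange_interpolation:
  assumes "finite X" "degree p < card X"
  shows "p = (\<Sum>a\<in>X. smult (poly p a) (lagrange_basis X a))"
proof -
  define q where "q = p - (\<Sum>a\<in>X. smult (poly p a) (lagrange_basis X a))"
  have "degree q < card X"
  proof -
    have "degree (lagrange_basis X a) \<le> card X - 1" if "a \<in> X" for a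
      using degree_lagrange_basis[OF assms(1) that] by linarith
    then have "degree q \<le> card X - 1"
      unfolding q_def using assms
      by (intro degree_diff_le degree_sum_le order.trans[OF degree_smult_le]) auto
    then show ?thesis
      using assms(2) by linarith
  qed
  moreover have "X \<subseteq> {x. poly q x = 0}"
    using assms(1) by (auto simp: q_def poly_sum poly_lagrange_basis if_distrib cong: if_cong)
  ultimately have "q = 0"
    using card_poly_roots_bound card_mono poly_roots_finite assms(1) by (metis leD le_trans)
  then show ?thesis
    by (simp add: q_def)
qed

lemma abs_coeff_le_lagrange:
  assumes "finite X" "degree p < card X" "\<forall>a\<in>X. \<bar>poly p a\<bar> \<le> A"
  shows "\<bar>coeff p n\<bar> \<le> (\<Sum>a\<in>X. \<bar>coeff (lagrange_basis X a) n\<bar>) * A"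
proof -
  have "\<bar>coeff p n\<bar> = \<bar>\<Sum>a\<in>X. poly p a * coeff (lagrange_basis X a) n\<bar>"
    by (subst lagrange_interpolation[OF assms(1,2)]) (simp add: coeff_sum)
  also have "\<dots> \<le> (\<Sum>a\<in>X. \<bar>poly p a\<bar> * \<bar>coeff (lagrange_basis X a) n\<bar>)"
    by (rule order.trans[OF sum_abs]) (simp add: abs_mult)
  also have "\<dots> \<le> (\<Sum>a\<in>X. A * \<bar>coeff (lagrange_basis X a) n\<bar>)"
    using assms(3) by (intro sum_mono mult_right_mono) auto
  finally show ?thesis
    by (simp add: sum_distrib_left mult.commute)
qed

lemma sparse_poly_coeff_bound:
  fixes e :: "'b \<Rightarrow> nat"
  assumes "finite B" "inj_on e B" "\<forall>\<beta>\<in>B. e \<beta> < T"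
  obtains K :: real where "K > 0"
    "\<And>c A. \<forall>t\<in>{1..T}. \<bar>\<Sum>\<beta>\<in>B. c \<beta> * real t ^ e \<beta>\<bar> \<le> A \<Longrightarrow> \<forall>\<beta>\<in>B. \<bar>c \<beta>\<bar> \<le> K * A"
proof
  define X where "X = real ` {1..T}"
  define K where "K = 1 + (\<Sum>\<beta>\<in>B. \<Sum>a\<in>X. \<bar>coeff (lagrange_basis X a) (e \<beta>)\<bar>)"
  have X: "finite X" "card X = T"
    by (auto simp: X_def card_image inj_on_def)
  show "K > 0"
    unfolding K_def by (intro add_pos_nonneg sum_nonneg) auto
  fix c A
  assume at_nodes: "\<forall>t\<in>{1..T}. \<bar>\<Sum>\<beta>\<in>B. c \<beta> * real t ^ e \<beta>\<bar> \<le> A"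
  define p where "p = (\<Sum>\<beta>\<in>B. monom (c \<beta>) (e \<beta>))"
  show "\<forall>\<beta>\<in>B. \<bar>c \<beta>\<bar> \<le> K * A"
  proof
    fix \<beta>
    assume "\<beta> \<in> B"
    then have "T \<ge> 1"
      using assms(3) by fastforce
    then have "A \<ge> 0"
      using at_nodes by force
    have "degree p \<le> T - 1"
      unfolding p_def using assms(1,3)
      by (intro degree_sum_le order.trans[OF degree_monom_le]) (auto simp: less_Suc_eq_le)
    moreover have "\<forall>a\<in>X. \<bar>poly p a\<bar> \<le> A"
      using at_nodes by (auto simp: X_def p_def poly_sum poly_monom)
    moreover have "coeff p (e \<beta>) = c \<beta>"
      using assms(1,2) \<open>\<beta> \<in> B\<close> by (simp add: p_def coeff_sum inj_on_eq_iff cong: if_cong)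
    ultimately have "\<bar>c \<beta>\<bar> \<le> (\<Sum>a\<in>X. \<bar>coeff (lagrange_basis X a) (e \<beta>)\<bar>) * A"
      using abs_coeff_le_lagrange[OF X(1), of p A "e \<beta>"] X(2) \<open>T \<ge> 1\<close> by simp
    also have "\<dots> \<le> K * A"
    proof (rule mult_right_mono[OF _ \<open>A \<ge> 0\<close>])
      have "(\<Sum>a\<in>X. \<bar>coeff (lagrange_basis X a) (e \<beta>)\<bar>) \<le> (\<Sum>\<gamma>\<in>B. \<Sum>a\<in>X. \<bar>coeff (lagrange_basis X a) (e \<gamma>)\<bar>)"
        using \<open>\<beta> \<in> B\<close> assms(1) by (intro member_le_sum) (auto intro: sum_nonneg)
      then show "(\<Sum>a\<in>X. \<bar>coeff (lagrange_basis X a) (e \<beta>)\<bar>) \<le> K"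
        by (simp add: K_def)
    qed
    finally show "\<bar>c \<beta>\<bar> \<le> K * A" .
  qed
qed

section \<open>Kronecker substitution\<close>

lemma nat_digits_unique:
  fixes a b :: "nat \<Rightarrow> nat"
  assumes "\<forall>k<d. a k < M \<and> b k < M" "(\<Sum>k<d. a k * M ^ k) = (\<Sum>k<d. b k * M ^ k)" "k < d"
  shows "a k = b k"
  using assms
proof (induction d arbitrary: a b k)
  case (Suc d)
  have split: "(\<Sum>k<Suc d. f k * M ^ k) = f 0 + M * (\<Sum>k<d. f (Suc k) * M ^ k)" for f :: "nat \<Rightarrow> nat"
    unfolding sum.lessThan_Suc_shift by (simp add: sum_distrib_left mult_ac)
  have eq: "a 0 + M * (\<Sum>k<d. a (Suc k) * M ^ k) = b 0 + M * (\<Sum>k<d. b (Suc k) * M ^ k)"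
    using Suc.prems(2) unfolding split .
  have "a 0 < M" "b 0 < M"
    using Suc.prems(1) by auto
  then have "a 0 = b 0"
    using arg_cong[OF eq, of "\<lambda>n. n mod M"] by simp
  then have "(\<Sum>k<d. a (Suc k) * M ^ k) = (\<Sum>k<d. b (Suc k) * M ^ k)"
    using eq \<open>a 0 < M\<close> by simp
  with Suc.IH[of "\<lambda>k. a (Suc k)" "\<lambda>k. b (Suc k)"] Suc.prems \<open>a 0 = b 0\<close> show ?case
    by (cases k) auto
qed simp

lemma digits_unique:
  fixes a b :: "'i \<Rightarrow> nat"
  assumes idx: "bij_betw idx I {..<d}" and "\<forall>i\<in>I. a i < M \<and> b i < M"
    and "(\<Sum>i\<in>I. a i * M ^ idx i) = (\<Sum>i\<in>I. b i * M ^ idx i)" and "i \<in> I"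
  shows "a i = b i"
proof -
  define g where "g = the_inv_into I idx"
  have reindex: "(\<Sum>i\<in>I. f i * M ^ idx i) = (\<Sum>k<d. f (g k) * M ^ k)" for f :: "'i \<Rightarrow> nat"
    using sum.reindex_bij_betw[OF idx, of "\<lambda>k. f (g k) * M ^ k"] idx
    by (simp add: g_def bij_betw_def the_inv_into_f_f)
  have "\<forall>k<d. g k \<in> I"
    using idx by (auto simp: g_def bij_betw_def the_inv_into_into)
  then have "a (g k) = b (g k)" if "k < d" for k
    using assms(2,3) that by (intro nat_digits_unique[of d "a \<circ> g" M "b \<circ> g", simplified]) (auto simp: reindex)
  then show ?thesis
    using idx \<open>i \<in> I\<close> by (metis bij_betwE g_def bij_betw_def lessThan_iff the_inv_into_f_f)
qed

lemma mult_le_sdeg: "s i * \<beta> i \<le> sdeg s \<beta>"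
  unfolding sdeg_def by (rule member_le_sum) auto

lemma midx_finite:
  assumes "\<forall>i. s i \<ge> 1"
  shows "finite (midx s \<eta>)"
proof (rule finite_subset)
  show "midx s \<eta> \<subseteq> PiE UNIV (\<lambda>_. {..nat \<lfloor>\<eta>\<rfloor>})"
  proof
    fix \<beta>
    assume "\<beta> \<in> midx s \<eta>"
    then have "real (s i * \<beta> i) \<le> \<eta>" for i
      using of_nat_mono[OF mult_le_sdeg[of s i \<beta>]] unfolding midx_def by (blast intro: order.trans)
    moreover have "\<beta> i \<le> s i * \<beta> i" for i
      using assms by simp
    ultimately have "\<beta> i \<le> nat \<lfloor>\<eta>\<rfloor>" for i
      by (meson le_nat_floor of_nat_le_iff order.trans)
    then show "\<beta> \<in> PiE UNIV (\<lambda>_. {..nat \<lfloor>\<eta>\<rfloor>})"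
      by auto
  qed
qed (simp add: finite_PiE)

definition kronecker_exponent :: "('n::finite \<Rightarrow> nat) \<Rightarrow> ('n \<Rightarrow> nat) \<Rightarrow> ('n \<Rightarrow> nat) \<Rightarrow> nat" where
  "kronecker_exponent w s \<beta> = (\<Sum>j\<in>UNIV. s j * \<beta> j * w j)"

lemma mono_pow_kronecker_point:
  "mono_pow (\<chi> j. (real t ^ w j * \<delta>) ^ s j) \<beta> = \<delta> ^ sdeg s \<beta> * real t ^ kronecker_exponent w s \<beta>"
proof -
  have "((real t ^ w j * \<delta>) ^ s j) ^ \<beta> j = real t ^ (s j * \<beta> j * w j) * \<delta> ^ (s j * \<beta> j)" for j
    by (simp add: power_mult_distrib power_mult[symmetric] mult_ac)
  then show ?thesis
    by (simp add: mono_pow_def sdeg_def kronecker_exponent_def prod.distrib power_sum mult.commute)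
qed

lemma inj_on_kronecker_exponent:
  assumes idx: "bij_betw idx UNIV {..<CARD('n::finite)}" and s: "\<forall>i. s i \<ge> 1"
    and digits: "\<forall>\<beta>\<in>B. \<forall>i. s i * \<beta> i < M"
  shows "inj_on (kronecker_exponent (\<lambda>j::'n. M ^ idx j) s) B"
proof (rule inj_onI)
  fix \<beta> \<gamma>
  assume "\<beta> \<in> B" "\<gamma> \<in> B" "kronecker_exponent (\<lambda>j. M ^ idx j) s \<beta> = kronecker_exponent (\<lambda>j. M ^ idx j) s \<gamma>"
  then have "s i * \<beta> i = s i * \<gamma> i" for i
    using digits by (intro digits_unique[OF idx, of "\<lambda>i. s i * \<beta> i" M "\<lambda>i. s i * \<gamma> i"])
      (auto simp: kronecker_exponent_def)
  then show "\<beta> = \<gamma>"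
    using s by (metis ext mult_cancel1 not_one_le_zero)
qed

lemma scaled_coeffs_bound_at_test_points:
  fixes s :: "'n::finite \<Rightarrow> nat" and B :: "('n \<Rightarrow> nat) set"
  assumes s: "\<forall>i. s i \<ge> 1" and "finite B"
  obtains R :: "('n \<Rightarrow> nat) set" and K :: real
  where "finite R" "R \<noteq> {}" "\<forall>\<rho>\<in>R. \<forall>j. \<rho> j \<ge> 1" "K > 0"
    "\<And>c \<delta> A. \<forall>\<rho>\<in>R. \<bar>\<Sum>\<beta>\<in>B. c \<beta> * mono_pow (\<chi> j. (real (\<rho> j) * \<delta>) ^ s j) \<beta>\<bar> \<le> A
      \<Longrightarrow> \<forall>\<beta>\<in>B. \<bar>c \<beta> * \<delta> ^ sdeg s \<beta>\<bar> \<le> K * A"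
proof -
  define M where "M = Suc (\<Sum>\<beta>\<in>B. sdeg s \<beta>)"
  obtain idx :: "'n \<Rightarrow> nat" where idx: "bij_betw idx UNIV {..<CARD('n)}"
    using ex_bij_betw_finite_nat[of "UNIV :: 'n set"] by (auto simp: atLeast0LessThan)
  define w where "w j = M ^ idx j" for j
  define e where "e = kronecker_exponent w s"
  define T where "T = Suc (\<Sum>\<beta>\<in>B. e \<beta>)"
  have "\<forall>\<beta>\<in>B. \<forall>i. s i * \<beta> i < M"
  proof (intro ballI allI)
    fix \<beta> i
    assume "\<beta> \<in> B"
    then have "sdeg s \<beta> \<le> (\<Sum>\<gamma>\<in>B. sdeg s \<gamma>)"
      using \<open>finite B\<close> by (intro member_le_sum) auto
    then show "s i * \<beta> i < M"
      using mult_le_sdeg[of s i \<beta>] by (simp add: M_def)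
  qed
  then have "inj_on e B"
    unfolding e_def w_def by (rule inj_on_kronecker_exponent[OF idx s])
  moreover have "\<forall>\<beta>\<in>B. e \<beta> < T"
    using \<open>finite B\<close> by (auto simp: T_def less_Suc_eq_le intro: member_le_sum)
  ultimately obtain K where "K > 0"
    and K: "\<And>c A. \<forall>t\<in>{1..T}. \<bar>\<Sum>\<beta>\<in>B. c \<beta> * real t ^ e \<beta>\<bar> \<le> A \<Longrightarrow> \<forall>\<beta>\<in>B. \<bar>c \<beta>\<bar> \<le> K * A"
    by (rule sparse_poly_coeff_bound[OF \<open>finite B\<close>]) blast+
  show thesis
  proof (rule that[of "(\<lambda>t j. t ^ w j) ` {1..T}" K])
    fix c \<delta> A
    assume "\<forall>\<rho>\<in>(\<lambda>t j. t ^ w j) ` {1..T}. \<bar>\<Sum>\<beta>\<in>B. c \<beta> * mono_pow (\<chi> j. (real (\<rho> j) * \<delta>) ^ s j) \<beta>\<bar> \<le> A"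
    then have "\<forall>t\<in>{1..T}. \<bar>\<Sum>\<beta>\<in>B. (c \<beta> * \<delta> ^ sdeg s \<beta>) * real t ^ e \<beta>\<bar> \<le> A"
      by (simp add: mono_pow_kronecker_point e_def mult.assoc)
    then show "\<forall>\<beta>\<in>B. \<bar>c \<beta> * \<delta> ^ sdeg s \<beta>\<bar> \<le> K * A"
      by (rule K)
  qed (use \<open>K > 0\<close> in \<open>auto simp: T_def\<close>)
qed

lemma abs_le_powr_diff:
  fixes \<delta> :: real
  assumes "\<delta> > 0" "\<bar>c * \<delta> ^ k\<bar> \<le> M * \<delta> powr \<eta>"
  shows "\<bar>c\<bar> \<le> M * \<delta> powr (\<eta> - k)"
proof -
  have "\<bar>c\<bar> * \<delta> powr k \<le> M * \<delta> powr \<eta>"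
    using assms by (simp add: abs_mult powr_realpow)
  then show ?thesis
    using assms(1) by (simp add: powr_diff pos_le_divide_eq)
qed

theorem lemma3p5:
  fixes s :: "'n::finite \<Rightarrow> nat" and \<eta> \<alpha> :: real
  assumes "\<forall>i. s i \<ge> 1" and "0 < \<alpha>" and "\<alpha> < \<eta>"
  shows "\<exists>K>0. \<forall>(D :: (real^'n) set) x y (U :: real^'n \<Rightarrow> real^'n \<Rightarrow> complex)
            (\<nu> :: ('n \<Rightarrow> nat) \<Rightarrow> real) (C :: real).
     x \<in> D \<longrightarrow> y \<in> D \<longrightarrow> x \<noteq> y \<longrightarrow>
     (\<forall>\<rho> :: 'n \<Rightarrow> nat. (\<forall>j. \<rho> j \<ge> 1) \<longrightarrow>
        y + (\<chi> j. (real (\<rho> j) * sdist s x y) ^ s j) \<in> D) \<longrightarrow>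
     is_germ D U \<longrightarrow>
     germ_norm_set s \<eta> D U \<noteq> {} \<longrightarrow> germ_semi_set s \<eta> \<alpha> D U \<noteq> {} \<longrightarrow>
     C \<ge> 1 \<longrightarrow>
     (\<forall>z\<in>D. cmod (U x z - U y z
          - of_real (\<Sum>\<beta>\<in>midx s \<eta>. \<nu> \<beta> * mono_pow (z - y) \<beta>))
        \<le> C * germ_semi s \<eta> \<alpha> D U * sdist s y z powr \<alpha>
            * (sdist s x y + sdist s y z) powr (\<eta> - \<alpha>)) \<longrightarrow>
     (\<forall>\<beta>\<in>midx s \<eta>. \<bar>\<nu> \<beta>\<bar> \<le> K * (germ_norm s \<eta> D U + C * germ_semi s \<eta> \<alpha> D U)
        * sdist s x y powr (\<eta> - real (sdeg s \<beta>)))"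
proof -
  obtain R K where R: "finite R" "R \<noteq> {}" "\<forall>\<rho>\<in>R. \<forall>j. \<rho> j \<ge> 1" and "K > 0"
    and coeffs: "\<And>c \<delta> A. \<forall>\<rho>\<in>R. \<bar>\<Sum>\<beta>\<in>midx s \<eta>. c \<beta> * mono_pow (\<chi> j. (real (\<rho> j) * \<delta>) ^ s j) \<beta>\<bar> \<le> A
      \<Longrightarrow> \<forall>\<beta>\<in>midx s \<eta>. \<bar>c \<beta> * \<delta> ^ sdeg s \<beta>\<bar> \<le> K * A"
    by (rule scaled_coeffs_bound_at_test_points[OF assms(1) midx_finite[OF assms(1)]]) blast+
  define G where "G = (\<Sum>\<rho>\<in>R. (1 + (\<Sum>j\<in>UNIV. real (\<rho> j))) powr \<eta>)"
  have "(1 + (\<Sum>j\<in>UNIV. real (\<rho> j))) powr \<eta> > 0" for \<rho> :: "'n \<Rightarrow> nat"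
    using add_pos_nonneg[OF zero_less_one sum_nonneg[of UNIV "\<lambda>j. real (\<rho> j)"]] by simp
  then have "G > 0"
    unfolding G_def by (rule sum_pos[OF R(1,2)])
  show ?thesis
  proof (intro exI[of _ "2 * K * G"] conjI allI impI ballI)
    fix D x y U \<nu> C \<beta>
    assume "x \<in> D" "y \<in> D" "x \<noteq> y"
      and zD: "\<forall>\<rho> :: 'n \<Rightarrow> nat. (\<forall>j. \<rho> j \<ge> 1) \<longrightarrow> y + (\<chi> j. (real (\<rho> j) * sdist s x y) ^ s j) \<in> D"
      and "is_germ D U" and norm: "germ_norm_set s \<eta> D U \<noteq> {}" and semi: "germ_semi_set s \<eta> \<alpha> D U \<noteq> {}"
      and "C \<ge> 1"
      and incr: "\<forall>z\<in>D. cmod (U x z - U y z - of_real (\<Sum>\<beta>\<in>midx s \<eta>. \<nu> \<beta> * mono_pow (z - y) \<beta>))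
        \<le> C * germ_semi s \<eta> \<alpha> D U * sdist s y z powr \<alpha> * (sdist s x y + sdist s y z) powr (\<eta> - \<alpha>)"
      and \<beta>: "\<beta> \<in> midx s \<eta>"
    define \<delta> where "\<delta> = sdist s x y"
    define N where "N = 2 * germ_norm s \<eta> D U + C * germ_semi s \<eta> \<alpha> D U"
    have "\<delta> > 0"
      unfolding \<delta>_def using \<open>x \<noteq> y\<close> by (rule sdist_pos)
    have "C * germ_semi s \<eta> \<alpha> D U \<ge> 0"
      using germ_semi_nonneg[OF semi] \<open>C \<ge> 1\<close> by simp
    then have "N \<ge> 0"
      using germ_norm_nonneg[OF norm] by (simp add: N_def)
    have "\<bar>\<Sum>\<beta>\<in>midx s \<eta>. \<nu> \<beta> * mono_pow (\<chi> j. (real (\<rho> j) * \<delta>) ^ s j) \<beta>\<bar> \<le> N * G * \<delta> powr \<eta>"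
      if "\<rho> \<in> R" for \<rho>
    proof -
      have "y + (\<chi> j. (real (\<rho> j) * sdist s x y) ^ s j) \<in> D"
        using zD R(3) that by blast
      from germ_test_point_bound[OF assms(1) _ _ \<open>C * germ_semi s \<eta> \<alpha> D U \<ge> 0\<close> norm \<open>x \<in> D\<close> \<open>y \<in> D\<close> this incr]
      have "\<bar>\<Sum>\<beta>\<in>midx s \<eta>. \<nu> \<beta> * mono_pow (\<chi> j. (real (\<rho> j) * \<delta>) ^ s j) \<beta>\<bar>
          \<le> N * (1 + (\<Sum>j\<in>UNIV. real (\<rho> j))) powr \<eta> * \<delta> powr \<eta>"
        using assms(2,3) unfolding N_def \<delta>_def by simp
      also have "\<dots> \<le> N * G * \<delta> powr \<eta>"
        unfolding G_def using R(1) that \<open>N \<ge> 0\<close>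
        by (intro mult_right_mono mult_left_mono member_le_sum) auto
      finally show ?thesis .
    qed
    then have "\<forall>\<beta>\<in>midx s \<eta>. \<bar>\<nu> \<beta> * \<delta> ^ sdeg s \<beta>\<bar> \<le> K * (N * G * \<delta> powr \<eta>)"
      by (intro coeffs) blast
    then have "\<bar>\<nu> \<beta> * \<delta> ^ sdeg s \<beta>\<bar> \<le> K * N * G * \<delta> powr \<eta>"
      using \<beta> by (simp add: mult.assoc)
    then have "\<bar>\<nu> \<beta>\<bar> \<le> K * N * G * \<delta> powr (\<eta> - sdeg s \<beta>)"
      by (rule abs_le_powr_diff[OF \<open>\<delta> > 0\<close>])
    also have "\<dots> \<le> 2 * K * G * (germ_norm s \<eta> D U + C * germ_semi s \<eta> \<alpha> D U) * \<delta> powr (\<eta> - sdeg s \<beta>)"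
      using \<open>K > 0\<close> \<open>G > 0\<close> \<open>C * germ_semi s \<eta> \<alpha> D U \<ge> 0\<close>
      by (intro mult_right_mono) (auto simp: N_def)
    finally show "\<bar>\<nu> \<beta>\<bar> \<le> 2 * K * G * (germ_norm s \<eta> D U + C * germ_semi s \<eta> \<alpha> D U)
      * sdist s x y powr (\<eta> - sdeg s \<beta>)"
      by (simp add: \<delta>_def)
  qed (use \<open>K > 0\<close> \<open>G > 0\<close> in simp)
qed

end
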